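(* Let $a<b$ be real, $\phi:\mathbb{R}^n\to\mathbb{R}$ Schur-concave on $[a,b]^n$, $\alpha\in\mathbb{R}$, and $S^\alpha=\{(x,t)\mid\phi(x)\le t\le\alpha,\ x\in[a,b]^n\}$. For $x\in[a,b]^n$ let $S(x)=\sum_{i=1}^n(x_i-a)$. For $s\in[0,n(b-a)]$ let $i^s=\max\{i\in\{0,\dots,n\}\mid i(b-a)<s\}$ (with $i^0=0$) and define $u^s\in\mathbb{R}^n$ by $u^s_i=b$ for $i\le i^s$, $u^s_{i^s+1}=a+s-(b-a)i^s$, and $u^s_i=a$ for $i>i^s+1$. Let $\Theta^\alpha=\{(x,t)\mid\phi(u^{S(x)})\le t\le\alpha,\ x\in[a,b]^n\}$. Then $\mathrm{conv}(S^\alpha)=\mathrm{conv}(\Theta^\alpha)$. Moreover, if $\phi$ is component-wise convex on $[a,b]^n$, then $\Theta^\alpha$ is convex.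
   Context: $\phi$ is Schur-concave on $C$ if for all $x,y\in C$, $x\ge_m y$ implies $\phi(x)\le\phi(y)$, where $x\ge_m y$ means $\sum_{i=1}^j x_{[i]}\ge\sum_{i=1}^j y_{[i]}$ for $j<n$ with equality for $j=n$ ($x_{[i]}$ the $i$-th largest entry). $\phi$ is component-wise convex if it is convex in each single coordinate when all other coordinates are fixed. *)

theory Defs
  imports "HOL-Analysis.Analysis"
begin

text \<open>Vectors in R^n are modelled as real^'n::{finite,linorder} where the index type 'n::{finite,linorder} is finite and
  linearly ordered; n = CARD('n) and the order on 'n::{finite,linorder} gives the coordinates 1..n.\<close>

definition box_n :: "real \<Rightarrow> real \<Rightarrow> (real^'n::{finite,linorder}) set" where
  "box_n a b = {x. \<forall>i. a \<le> x $ i \<and> x $ i \<le> b}"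

text \<open>Entries of x sorted in decreasing order: element number k-1 is x_[k].\<close>
definition dec_entries :: "real^'n::{finite,linorder} \<Rightarrow> real list" where
  "dec_entries x = rev (sort (map (\<lambda>i. x $ i) (sorted_list_of_set (UNIV :: 'n set))))"

definition majorizes :: "real^'n::{finite,linorder} \<Rightarrow> real^'n::{finite,linorder} \<Rightarrow> bool" where
  "majorizes x y \<longleftrightarrow>
     (\<forall>j. 1 \<le> j \<and> j < CARD('n) \<longrightarrow>
        sum_list (take j (dec_entries x)) \<ge> sum_list (take j (dec_entries y))) \<and>
     sum_list (dec_entries x) = sum_list (dec_entries y)"

definition schur_concave_on :: "(real^'n::{finite,linorder}) set \<Rightarrow> (real^'n::{finite,linorder} \<Rightarrow> real) \<Rightarrow> bool" where
  "schur_concave_on C \<phi> \<longleftrightarrow> (\<forall>x\<in>C. \<forall>y\<in>C. majorizes x y \<longrightarrow> \<phi> x \<le> \<phi> y)"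

definition compwise_convex_on :: "real \<Rightarrow> real \<Rightarrow> (real^'n::{finite,linorder} \<Rightarrow> real) \<Rightarrow> bool" where
  "compwise_convex_on a b \<phi> \<longleftrightarrow>
     (\<forall>x\<in>box_n a b. \<forall>i. convex_on {a..b} (\<lambda>t. \<phi> (\<chi> j. if j = i then t else x $ j)))"

text \<open>0-based position of index j in the order of 'n::{finite,linorder} (so coordinate number rank j + 1).\<close>
definition rank_idx :: "'n::{finite,linorder} \<Rightarrow> nat" where
  "rank_idx j = card {k. k < j}"

definition S_sum :: "real \<Rightarrow> real^'n::{finite,linorder} \<Rightarrow> real" where
  "S_sum a x = (\<Sum>i\<in>UNIV. x $ i - a)"

definition i_star :: "nat \<Rightarrow> real \<Rightarrow> real \<Rightarrow> real \<Rightarrow> nat" where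
  "i_star n a b s = (if s = 0 then 0 else Max {i. i \<le> n \<and> real i * (b - a) < s})"

definition u_vec :: "real \<Rightarrow> real \<Rightarrow> real \<Rightarrow> real^'n::{finite,linorder}" where
  "u_vec a b s = (\<chi> j. let k = i_star CARD('n) a b s in
      if rank_idx j < k then b
      else if rank_idx j = k then a + s - (b - a) * real k
      else a)"

definition S_alpha :: "(real^'n::{finite,linorder} \<Rightarrow> real) \<Rightarrow> real \<Rightarrow> real \<Rightarrow> real \<Rightarrow> ((real^'n::{finite,linorder}) \<times> real) set" where
  "S_alpha \<phi> a b \<alpha> = {(x, t). \<phi> x \<le> t \<and> t \<le> \<alpha> \<and> x \<in> box_n a b}"

definition Theta_alpha :: "(real^'n::{finite,linorder} \<Rightarrow> real) \<Rightarrow> real \<Rightarrow> real \<Rightarrow> real \<Rightarrow> ((real^'n::{finite,linorder}) \<times> real) set" where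
  "Theta_alpha \<phi> a b \<alpha> = {(x, t). \<phi> (u_vec a b (S_sum a x)) \<le> t \<and> t \<le> \<alpha> \<and> x \<in> box_n a b}"

end

theory Submission
  imports Defs "HOL-Library.Multiset"
begin

text \<open>
  Write h = b - a. Vectors in [a,b]^n with at most one coordinate strictly between a and b are
  extremal for majorization: such a vector majorizes every vector of [a,b]^n with the same
  coordinate sum, so by Schur-concavity it minimizes \<phi> on that slice; u^s is one of them.
  Hence S^\<alpha> \<subseteq> \<Theta>^\<alpha>. Conversely, moving mass between two interior coordinates writes
  every x as a convex combination of extremal vectors with the same sum, and all of these lie in
  S^\<alpha> at any height t \<ge> \<phi>(u^{S(x)}), so \<Theta>^\<alpha> \<subseteq> conv S^\<alpha>.

  For the second claim, \<Theta>^\<alpha> is the epigraph of G \<circ> S truncated at \<alpha>, where G s = \<phi>(u^s).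
  On each piece [kh, (k+1)h] only one coordinate of u^s moves, so G is convex there by
  component-wise convexity. At a kink M = kh the left slope of G is at most the right one:
  near M the function G is \<psi>(b - x, a) on the left and \<psi>(b, a + y) on the right for the
  separately convex function \<psi> of the two moving coordinates, and Schur-concavity gives
  \<psi>(b, a) \<le> \<psi>(b - y, a + y).
\<close>

section \<open>Majorization by vectors with one interior coordinate\<close>

definition interior_coords :: "real \<Rightarrow> real \<Rightarrow> real^'n::{finite,linorder} \<Rightarrow> 'n set" where
  "interior_coords a b x = {i. a < x $ i \<and> x $ i < b}"

lemma mset_dec_entries:
  "mset (dec_entries x) = image_mset (\<lambda>i. x $ i) (mset_set (UNIV :: 'n::{finite,linorder} set))"
  unfolding dec_entries_def by (metis mset_map mset_rev mset_sort mset_sorted_list_of_multiset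
      sorted_list_of_mset_set)

lemma sorted_wrt_dec_entries: "sorted_wrt (\<ge>) (dec_entries x)"
  by (simp add: dec_entries_def sorted_wrt_rev)

lemma sum_list_dec_entries: "sum_list (dec_entries x) = (\<Sum>i\<in>UNIV. x $ i)"
  by (metis mset_dec_entries sum_mset_sum_list sum_unfold_sum_mset)

lemma length_dec_entries: "length (dec_entries (x::real^'n::{finite,linorder})) = CARD('n)"
  by (metis mset_dec_entries size_mset size_image_mset size_mset_set)

lemma set_dec_entries: "set (dec_entries x) = range (\<lambda>i. x $ i)"
  by (simp flip: set_mset_mset add: mset_dec_entries)

lemma length_filter_dec_entries: "length (filter P (dec_entries x)) = card {i. P (x $ i)}"
proof -
  have "length (filter P (dec_entries x)) = size (filter_mset P (mset (dec_entries x)))"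
    by (metis mset_filter size_mset)
  also have "\<dots> = card {i. P (x $ i)}"
    by (simp add: mset_dec_entries filter_mset_image_mset)
  finally show ?thesis .
qed

lemma sum_list_le_length_mult: "(\<And>z. z \<in> set xs \<Longrightarrow> z \<le> c) \<Longrightarrow> sum_list xs \<le> real (length xs) * c"
  by (induction xs) (auto simp: algebra_simps add_mono)

lemma length_mult_le_sum_list: "(\<And>z. z \<in> set xs \<Longrightarrow> c \<le> z) \<Longrightarrow> real (length xs) * c \<le> sum_list xs"
  by (induction xs) (auto simp: algebra_simps add_mono)

lemma sum_list_dec_entries_S_sum:
  "sum_list (dec_entries (x::real^'n::{finite,linorder})) = real CARD('n) * a + S_sum a x"
  by (simp add: sum_list_dec_entries S_sum_def sum_subtractf)

lemma dec_entries_in_box: "x \<in> box_n a b \<Longrightarrow> z \<in> set (dec_entries x) \<Longrightarrow> a \<le> z \<and> z \<le> b"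
  by (auto simp: set_dec_entries box_n_def)

lemma sum_take_dec_entries_le:
  fixes x :: "real^'n::{finite,linorder}"
  assumes x: "x \<in> box_n a b" and j: "j \<le> CARD('n)"
  shows "sum_list (take j (dec_entries x)) \<le> min (real j * b) (real j * a + S_sum a x)"
proof -
  let ?T = "take j (dec_entries x)" and ?D = "drop j (dec_entries x)"
  have "sum_list ?T \<le> real j * b"
    using sum_list_le_length_mult[of ?T b] dec_entries_in_box[OF x] j
    by (simp add: length_dec_entries) (meson in_set_takeD)
  moreover have "real (CARD('n) - j) * a \<le> sum_list ?D"
    using length_mult_le_sum_list[of ?D a] dec_entries_in_box[OF x]
    by (simp add: length_dec_entries) (meson in_set_dropD)
  moreover have "sum_list ?T + sum_list ?D = real CARD('n) * a + S_sum a x"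
    by (metis append_take_drop_id sum_list_append sum_list_dec_entries_S_sum)
  ultimately show ?thesis using j by (simp add: of_nat_diff algebra_simps)
qed

lemma sum_take_dec_entries_ge:
  fixes x :: "real^'n::{finite,linorder}"
  assumes x: "x \<in> box_n a b" and I: "card (interior_coords a b x) \<le> 1" and j: "j \<le> CARD('n)"
  shows "min (real j * b) (real j * a + S_sum a x) \<le> sum_list (take j (dec_entries x))"
proof -
  let ?T = "take j (dec_entries x)" and ?D = "drop j (dec_entries x)"
  let ?inner = "\<lambda>z. a < z \<and> z < b"
  have "(\<forall>u\<in>set ?T. u = b) \<or> (\<forall>v\<in>set ?D. v = a)"
  proof (rule ccontr)
    assume "\<not> ?thesis"
    then obtain u v where u: "u \<in> set ?T" "u \<noteq> b" and v: "v \<in> set ?D" "v \<noteq> a" by blast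
    have "sorted_wrt (\<ge>) (?T @ ?D)" using sorted_wrt_dec_entries[of x] by simp
    then have "v \<le> u" using u(1) v(1) unfolding sorted_wrt_append by blast
    moreover have "a \<le> v" "u \<le> b"
      using u(1) v(1) dec_entries_in_box[OF x] by (meson in_set_takeD in_set_dropD)+
    ultimately have "u \<in> set (filter ?inner ?T)" "v \<in> set (filter ?inner ?D)"
      using u v by auto
    then have "1 \<le> length (filter ?inner ?T)" "1 \<le> length (filter ?inner ?D)"
      by (metis Suc_le_eq One_nat_def length_pos_if_in_set)+
    moreover have "length (filter ?inner ?T) + length (filter ?inner ?D) = card (interior_coords a b x)"
      using length_filter_dec_entries[of ?inner x]
      by (metis append_take_drop_id filter_append length_append interior_coords_def)
    ultimately show False using I by linarith
  qed
  moreover have "real j * b \<le> sum_list ?T" if "\<forall>u\<in>set ?T. u = b"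
    using that j length_mult_le_sum_list[of ?T b] by (simp add: length_dec_entries)
  moreover have "real j * a + S_sum a x \<le> sum_list ?T" if "\<forall>v\<in>set ?D. v = a"
  proof -
    have "sum_list ?D \<le> real (CARD('n) - j) * a"
      using that sum_list_le_length_mult[of ?D a] by (simp add: length_dec_entries)
    moreover have "sum_list ?T + sum_list ?D = real CARD('n) * a + S_sum a x"
      by (metis append_take_drop_id sum_list_append sum_list_dec_entries_S_sum)
    ultimately show ?thesis using j by (simp add: of_nat_diff algebra_simps)
  qed
  ultimately show ?thesis by linarith
qed

lemma majorizes_of_extremal:
  fixes x y :: "real^'n::{finite,linorder}"
  assumes y: "y \<in> box_n a b" "card (interior_coords a b y) \<le> 1"
    and x: "x \<in> box_n a b" and S: "S_sum a y = S_sum a x"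
  shows "majorizes y x"
  unfolding majorizes_def
proof (intro conjI allI impI)
  fix j assume "1 \<le> j \<and> j < CARD('n)"
  then show "sum_list (take j (dec_entries x)) \<le> sum_list (take j (dec_entries y))"
    using sum_take_dec_entries_le[OF x] sum_take_dec_entries_ge[OF y] S
    by (metis less_imp_le order.trans)
qed (simp add: sum_list_dec_entries_S_sum[of _ a] S)

section \<open>Staircase vectors\<close>

lemma rank_idx_strict_mono: "strict_mono (rank_idx :: 'n::{finite,linorder} \<Rightarrow> nat)"
proof
  fix j j' :: 'n assume "j < j'"
  then have "{k. k < j} \<subset> {k. k < j'}" by auto
  then show "rank_idx j < rank_idx j'" unfolding rank_idx_def by (intro psubset_card_mono) auto
qed

lemma inj_rank_idx: "inj (rank_idx :: 'n::{finite,linorder} \<Rightarrow> nat)"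
  using rank_idx_strict_mono by (rule strict_mono_imp_inj_on)

lemma bij_betw_rank_idx: "bij_betw (rank_idx :: 'n::{finite,linorder} \<Rightarrow> nat) UNIV {..<CARD('n)}"
proof -
  have "rank_idx j < CARD('n)" for j :: 'n
  proof -
    have "{k. k < j} \<subset> UNIV" by auto
    then show ?thesis unfolding rank_idx_def by (intro psubset_card_mono) auto
  qed
  moreover have "card (range (rank_idx :: 'n \<Rightarrow> nat)) = CARD('n)"
    using card_image[OF inj_rank_idx] by simp
  ultimately have "range (rank_idx :: 'n \<Rightarrow> nat) = {..<CARD('n)}"
    by (intro card_subset_eq) auto
  then show ?thesis using inj_rank_idx by (simp add: bij_betw_def)
qed

lemma ex_rank_idx_eq: "r < CARD('n) \<Longrightarrow> \<exists>j::'n::{finite,linorder}. rank_idx j = r"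
  using bij_betw_rank_idx[where 'n='n] unfolding bij_betw_def by (metis imageE lessThan_iff)

lemma sum_rank_idx: "(\<Sum>j\<in>UNIV. f (rank_idx (j::'n::{finite,linorder}))) = (\<Sum>r<CARD('n). f r)"
  using sum.reindex_bij_betw[OF bij_betw_rank_idx, of f] by simp

definition staircase :: "real \<Rightarrow> real \<Rightarrow> nat \<Rightarrow> real \<Rightarrow> real \<Rightarrow> real^'n::{finite,linorder}" where
  "staircase a b k p q = (\<chi> j. if rank_idx j < k then b else if rank_idx j = k then p
                               else if rank_idx j = Suc k then q else a)"

lemma staircase_in_box: "p \<in> {a..b} \<Longrightarrow> q \<in> {a..b} \<Longrightarrow> staircase a b k p q \<in> box_n a b"
  by (simp add: staircase_def box_n_def)

lemma staircase_Suc: "staircase a b k b q = staircase a b (Suc k) q a"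
  by (simp add: vec_eq_iff staircase_def)

lemma staircase_update_fst:
  assumes "rank_idx i = k"
  shows "(\<chi> j. if j = i then t else staircase a b k p q $ j) = staircase a b k t q"
proof -
  have eq: "rank_idx j = k \<longleftrightarrow> j = i" for j using assms inj_rank_idx by (metis injD)
  show ?thesis by (simp add: vec_eq_iff staircase_def assms eq)
qed

lemma staircase_update_snd:
  assumes "rank_idx i = Suc k"
  shows "(\<chi> j. if j = i then t else staircase a b k p q $ j) = staircase a b k p t"
proof -
  have eq: "rank_idx j = Suc k \<longleftrightarrow> j = i" for j using assms inj_rank_idx by (metis injD)
  show ?thesis by (simp add: vec_eq_iff staircase_def assms eq)
qed

lemma card_interior_coords_staircase:
  "card (interior_coords a b (staircase a b k p a :: real^'n::{finite,linorder})) \<le> 1"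
proof -
  have "interior_coords a b (staircase a b k p a :: real^'n::{finite,linorder}) \<subseteq> {j. rank_idx j = k}"
    by (auto simp: interior_coords_def staircase_def)
  moreover have "card {j::'n. rank_idx j = k} \<le> 1"
    using inj_rank_idx by (auto simp: card_le_Suc0_iff_eq dest: injD)
  ultimately show ?thesis by (meson card_mono finite order.trans)
qed

lemma S_sum_staircase:
  assumes "k < CARD('n)" and "Suc k < CARD('n) \<or> q = a"
  shows "S_sum a (staircase a b k p q :: real^'n::{finite,linorder}) = real k * (b - a) + (p - a) + (q - a)"
proof -
  have "S_sum a (staircase a b k p q :: real^'n::{finite,linorder}) =
      (\<Sum>r<CARD('n). (if r < k then b - a else 0) + (if r = k then p - a else 0)
                     + (if r = Suc k then q - a else 0))"
    unfolding S_sum_def staircase_def by (simp flip: sum_rank_idx) (intro sum.cong; simp)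
  also have "\<dots> = real k * (b - a) + (p - a) + (q - a)"
  proof -
    have "{..<CARD('n)} \<inter> {r. r < k} = {..<k}" using assms by auto
    then show ?thesis using assms by (auto simp: sum.distrib sum.If_cases)
  qed
  finally show ?thesis .
qed

lemma u_vec_eq_staircase_i_star:
  "(u_vec a b s :: real^'n::{finite,linorder}) =
     staircase a b (i_star CARD('n) a b s) (a + s - (b - a) * i_star CARD('n) a b s) a"
  by (simp add: vec_eq_iff u_vec_def staircase_def Let_def)

lemma i_star_eqI:
  assumes "a < b" "k < n" "real k * (b - a) < s" "s \<le> (real k + 1) * (b - a)"
  shows "i_star n a b s = k"
proof -
  have "s \<noteq> 0" using assms by (smt (verit) mult_nonneg_nonneg of_nat_0_le_iff)
  moreover have "Max {i. i \<le> n \<and> real i * (b - a) < s} = k"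
  proof (rule Max_eqI)
    fix i assume "i \<in> {i. i \<le> n \<and> real i * (b - a) < s}"
    then have "real i * (b - a) < (real k + 1) * (b - a)" using assms(4) by (simp add: less_le_trans)
    then show "i \<le> k" using assms(1) by (simp add: mult_less_cancel_right)
  qed (use assms in auto)
  ultimately show ?thesis by (simp add: i_star_def)
qed

lemma u_vec_eq_staircase:
  assumes ab: "a < b" and k: "k < CARD('n)"
    and s: "real k * (b - a) \<le> s" "s \<le> (real k + 1) * (b - a)"
  shows "(u_vec a b s :: real^'n::{finite,linorder}) = staircase a b k (a + s - real k * (b - a)) a"
proof (cases "real k * (b - a) < s")
  case True
  then show ?thesis using i_star_eqI[OF ab k True s(2)] by (simp add: u_vec_eq_staircase_i_star mult.commute)
next
  case False
  then have s_eq: "s = real k * (b - a)" using s by simp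
  show ?thesis
  proof (cases k)
    case 0
    then show ?thesis using s_eq by (simp add: u_vec_eq_staircase_i_star i_star_def)
  next
    case (Suc k')
    have "i_star CARD('n) a b s = k'"
      using ab k s_eq Suc by (intro i_star_eqI) (auto simp: algebra_simps)
    moreover have "a + s - (b - a) * real k' = b" using s_eq Suc by (simp add: algebra_simps)
    ultimately have "(u_vec a b s :: real^'n::{finite,linorder}) = staircase a b k' b a"
      by (simp add: u_vec_eq_staircase_i_star)
    moreover have "a + s - real k * (b - a) = a" using s_eq by simp
    ultimately show ?thesis using Suc by (simp add: staircase_Suc)
  qed
qed

lemma ex_piece_containing:
  fixes h s :: real
  assumes h: "0 < h" and n: "0 < n" and s: "0 \<le> s" "s \<le> real n * h"
  obtains k where "k < n" "real k * h \<le> s" "s \<le> (real k + 1) * h"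
proof -
  define m where "m = nat \<lfloor>s / h\<rfloor>"
  have "real m = of_int \<lfloor>s / h\<rfloor>" using h s by (simp add: m_def)
  then have "real m \<le> s / h" "s / h < real m + 1" by linarith+
  then have m: "real m * h \<le> s" "s < (real m + 1) * h" using h by (simp_all add: field_simps)
  show ?thesis
  proof (cases "m < n")
    case True
    then show ?thesis using that m by fastforce
  next
    case False
    then have "real n * h \<le> s" using m h by (meson mult_right_mono not_less of_nat_le_iff order.trans less_imp_le)
    then have "s = real (n - 1) * h + h" using s n by (simp add: of_nat_diff algebra_simps)
    then show ?thesis using that[of "n - 1"] n h by (simp add: algebra_simps)
  qed
qed

lemma u_vec_extremal:
  assumes ab: "a < b" and s: "0 \<le> s" "s \<le> real CARD('n) * (b - a)"
  shows "(u_vec a b s :: real^'n::{finite,linorder}) \<in> box_n a b"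
    and "card (interior_coords a b (u_vec a b s :: real^'n::{finite,linorder})) \<le> 1"
    and "S_sum a (u_vec a b s :: real^'n::{finite,linorder}) = s"
proof -
  obtain k where k: "k < CARD('n)" "real k * (b - a) \<le> s" "s \<le> (real k + 1) * (b - a)"
    using ex_piece_containing[of "b - a" "CARD('n)" s] ab s by auto
  note u = u_vec_eq_staircase[OF ab k]
  show "(u_vec a b s :: real^'n::{finite,linorder}) \<in> box_n a b"
    unfolding u using ab k by (intro staircase_in_box) (auto simp: algebra_simps)
  show "card (interior_coords a b (u_vec a b s :: real^'n::{finite,linorder})) \<le> 1"
    unfolding u by (rule card_interior_coords_staircase)
  show "S_sum a (u_vec a b s :: real^'n::{finite,linorder}) = s"
    unfolding u using k by (simp add: S_sum_staircase)
qed

section \<open>The convex hull of the sublevel region\<close>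

lemma S_sum_transfer:
  fixes x :: "real^'n::{finite,linorder}"
  assumes "i \<noteq> j"
  shows "S_sum a (\<chi> l. if l = i then x $ i + \<tau> else if l = j then x $ j - \<tau> else x $ l) = S_sum a x"
proof -
  let ?e = "\<lambda>l. (if l = i then \<tau> else 0) - (if l = j then \<tau> else 0)"
  have "S_sum a (\<chi> l. if l = i then x $ i + \<tau> else if l = j then x $ j - \<tau> else x $ l)
      = (\<Sum>l\<in>UNIV. (x $ l - a) + ?e l)"
    unfolding S_sum_def using assms by (intro sum.cong) auto
  also have "\<dots> = S_sum a x" by (simp add: S_sum_def sum.distrib sum_subtractf)
  finally show ?thesis .
qed

lemma split_two_interior_coords:
  fixes x :: "real^'n::{finite,linorder}"
  assumes x: "x \<in> box_n a b" and ij: "i \<in> interior_coords a b x" "j \<in> interior_coords a b x" "i \<noteq> j"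
  obtains y z where "y \<in> box_n a b" "z \<in> box_n a b" "S_sum a y = S_sum a x" "S_sum a z = S_sum a x"
    "interior_coords a b y \<subset> interior_coords a b x" "interior_coords a b z \<subset> interior_coords a b x"
    "x \<in> closed_segment y z"
proof -
  define mv :: "real \<Rightarrow> real^'n::{finite,linorder}" where
    "mv \<tau> = (\<chi> l. if l = i then x $ i + \<tau> else if l = j then x $ j - \<tau> else x $ l)" for \<tau>
  have xi: "a < x $ i" "x $ i < b" and xj: "a < x $ j" "x $ j < b"
    using ij by (auto simp: interior_coords_def)
  \<comment> \<open>Move mass between coordinates i and j until one of them reaches a or b.\<close>
  define \<tau>1 where "\<tau>1 = min (b - x $ i) (x $ j - a)"
  define \<tau>2 where "\<tau>2 = min (x $ i - a) (b - x $ j)"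
  have \<tau>: "0 < \<tau>1" "0 < \<tau>2" using xi xj by (auto simp: \<tau>1_def \<tau>2_def)
  define y where "y = mv \<tau>1"
  define z where "z = mv (- \<tau>2)"
  have mv_nth: "mv \<tau> $ l = (if l = i then x $ i + \<tau> else if l = j then x $ j - \<tau> else x $ l)" for \<tau> l
    by (simp add: mv_def)
  have "y \<in> box_n a b" "z \<in> box_n a b"
    using x xi xj ij(3) by (auto simp: box_n_def y_def z_def mv_nth \<tau>1_def \<tau>2_def)
  moreover have "S_sum a y = S_sum a x" "S_sum a z = S_sum a x"
    using ij(3) by (simp_all add: y_def z_def mv_def S_sum_transfer)
  moreover have "interior_coords a b y \<subset> interior_coords a b x"
    using ij by (auto simp: interior_coords_def y_def mv_nth \<tau>1_def min_def split: if_splits)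
  moreover have "interior_coords a b z \<subset> interior_coords a b x"
    using ij by (auto simp: interior_coords_def z_def mv_nth \<tau>2_def min_def split: if_splits)
  moreover have "x \<in> closed_segment y z"
  proof -
    define u where "u = \<tau>1 / (\<tau>1 + \<tau>2)"
    have "u * (\<tau>1 + \<tau>2) = \<tau>1" "0 \<le> u" "u \<le> 1" using \<tau> by (simp_all add: u_def)
    then have "x = (1 - u) *\<^sub>R y + u *\<^sub>R z" "0 \<le> u" "u \<le> 1"
      by (auto simp: vec_eq_iff y_def z_def mv_nth algebra_simps)
    then show ?thesis by (auto simp: in_segment)
  qed
  ultimately show ?thesis using that by blast
qed

lemma box_subset_convex_hull_extremal:
  fixes x :: "real^'n::{finite,linorder}"
  assumes "x \<in> box_n a b"
  shows "x \<in> convex hull {y \<in> box_n a b. S_sum a y = S_sum a x \<and> card (interior_coords a b y) \<le> 1}"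
  using assms
proof (induction "card (interior_coords a b x)" arbitrary: x rule: less_induct)
  case less
  let ?E = "\<lambda>x. {y \<in> box_n a b. S_sum a y = S_sum a x \<and> card (interior_coords a b y) \<le> 1}"
  show ?case
  proof (cases "card (interior_coords a b x) \<le> 1")
    case True
    then show ?thesis using less.prems by (intro hull_inc) simp
  next
    case False
    then obtain i j where "i \<in> interior_coords a b x" "j \<in> interior_coords a b x" "i \<noteq> j"
      by (metis One_nat_def card_le_Suc0_iff_eq finite)
    then obtain y z where yz: "y \<in> box_n a b" "z \<in> box_n a b" "S_sum a y = S_sum a x" "S_sum a z = S_sum a x"
      "interior_coords a b y \<subset> interior_coords a b x" "interior_coords a b z \<subset> interior_coords a b x"
      "x \<in> closed_segment y z"
      using split_two_interior_coords less.prems by metis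
    have "y \<in> convex hull ?E x" "z \<in> convex hull ?E x"
      using less.hyps[OF psubset_card_mono[OF finite yz(5)] yz(1)]
        less.hyps[OF psubset_card_mono[OF finite yz(6)] yz(2)] yz(3,4) by simp_all
    then show ?thesis
      using yz(7) closed_segment_subset[OF _ _ convex_convex_hull] by blast
  qed
qed

lemma S_sum_range:
  fixes x :: "real^'n::{finite,linorder}"
  assumes "x \<in> box_n a b"
  shows "0 \<le> S_sum a x" "S_sum a x \<le> real CARD('n) * (b - a)"
proof -
  show "0 \<le> S_sum a x" unfolding S_sum_def using assms by (intro sum_nonneg) (auto simp: box_n_def)
  have "S_sum a x \<le> (\<Sum>i\<in>(UNIV::'n set). b - a)"
    unfolding S_sum_def using assms by (intro sum_mono) (auto simp: box_n_def)
  then show "S_sum a x \<le> real CARD('n) * (b - a)" by simp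
qed

lemma convex_hull_S_alpha_eq_Theta_alpha:
  fixes \<phi> :: "real^'n::{finite,linorder} \<Rightarrow> real"
  assumes ab: "a < b" and sc: "schur_concave_on (box_n a b) \<phi>"
  shows "convex hull (S_alpha \<phi> a b \<alpha>) = convex hull (Theta_alpha \<phi> a b \<alpha>)"
proof -
  let ?u = "\<lambda>x::real^'n::{finite,linorder}. u_vec a b (S_sum a x) :: real^'n::{finite,linorder}"
  have u: "?u x \<in> box_n a b" "card (interior_coords a b (?u x)) \<le> 1" "S_sum a (?u x) = S_sum a x"
    if "x \<in> box_n a b" for x
    using u_vec_extremal[OF ab S_sum_range[OF that]] by auto
  have "S_alpha \<phi> a b \<alpha> \<subseteq> Theta_alpha \<phi> a b \<alpha>"
  proof clarify
    fix x t assume "(x, t) \<in> S_alpha \<phi> a b \<alpha>"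
    then have x: "x \<in> box_n a b" "\<phi> x \<le> t" "t \<le> \<alpha>" by (auto simp: S_alpha_def)
    have "majorizes (?u x) x" using u[OF x(1)] x(1) by (intro majorizes_of_extremal) auto
    then have "\<phi> (?u x) \<le> \<phi> x" using sc u[OF x(1)] x(1) by (auto simp: schur_concave_on_def)
    then show "(x, t) \<in> Theta_alpha \<phi> a b \<alpha>" using x by (auto simp: Theta_alpha_def)
  qed
  moreover have "Theta_alpha \<phi> a b \<alpha> \<subseteq> convex hull (S_alpha \<phi> a b \<alpha>)"
  proof clarify
    fix x t assume "(x, t) \<in> Theta_alpha \<phi> a b \<alpha>"
    then have x: "x \<in> box_n a b" "\<phi> (?u x) \<le> t" "t \<le> \<alpha>" by (auto simp: Theta_alpha_def)
    let ?E = "{y \<in> box_n a b. S_sum a y = S_sum a x \<and> card (interior_coords a b y) \<le> 1}"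
    have "?E \<times> {t} \<subseteq> S_alpha \<phi> a b \<alpha>"
    proof clarify
      fix y :: "real^'n::{finite,linorder}"
      assume y: "y \<in> box_n a b" "S_sum a y = S_sum a x" "card (interior_coords a b y) \<le> 1"
      then have "majorizes y (?u x)" using u[OF x(1)] by (intro majorizes_of_extremal) auto
      then have "\<phi> y \<le> \<phi> (?u x)" using sc u[OF x(1)] y(1) by (auto simp: schur_concave_on_def)
      then show "(y, t) \<in> S_alpha \<phi> a b \<alpha>" using x y by (auto simp: S_alpha_def)
    qed
    moreover have "(x, t) \<in> convex hull (?E \<times> {t})"
      using box_subset_convex_hull_extremal[OF x(1)] by (simp add: convex_hull_Times)
    ultimately show "(x, t) \<in> convex hull (S_alpha \<phi> a b \<alpha>)" by (meson hull_mono subsetD)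
  qed
  ultimately show ?thesis by (metis convex_convex_hull hull_minimal hull_mono subset_antisym)
qed

section \<open>Slopes of convex functions\<close>

lemma le_of_le_add_vanishing:
  fixes u v c \<delta> :: real
  assumes "0 < \<delta>" and le: "\<And>y. 0 < y \<Longrightarrow> y \<le> \<delta> \<Longrightarrow> u \<le> v + y * c"
  shows "u \<le> v"
proof (rule tendsto_lowerbound)
  show "((\<lambda>y. v + y * c) \<longlongrightarrow> v) (at_right 0)"
    by (auto intro!: tendsto_eq_intros)
  show "\<forall>\<^sub>F y in at_right 0. u \<le> v + y * c"
    using assms by (auto simp: eventually_at_right_field intro!: exI[of _ \<delta>])
qed simp

lemma convex_on_chord_le:
  fixes f :: "real \<Rightarrow> real"
  assumes "convex_on S f" "u \<in> S" "v \<in> S" "0 \<le> t" "t \<le> 1"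
  shows "f (u + t * (v - u)) \<le> f u + t * (f v - f u)"
proof -
  have "f ((1 - t) *\<^sub>R u + t *\<^sub>R v) \<le> (1 - t) * f u + t * f v"
    using assms by (intro convex_onD) auto
  then show ?thesis by (simp add: algebra_simps)
qed

lemma separately_convex_corner_slope_le:
  fixes \<psi> :: "real \<Rightarrow> real \<Rightarrow> real"
  assumes cp: "\<And>q. q \<in> {a..b} \<Longrightarrow> convex_on {a..b} (\<lambda>p. \<psi> p q)"
    and cq: "\<And>p. p \<in> {a..b} \<Longrightarrow> convex_on {a..b} (\<lambda>q. \<psi> p q)"
    and transfer: "\<And>y. 0 \<le> y \<Longrightarrow> y \<le> b - a \<Longrightarrow> \<psi> b a \<le> \<psi> (b - y) (a + y)"
    and x: "0 < x" "x \<le> b - a" and y': "0 < y'" "y' \<le> b - a"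
  shows "(\<psi> b a - \<psi> (b - x) a) / x \<le> (\<psi> b (a + y') - \<psi> b a) / y'"
proof -
  define R where "R = (\<psi> b (a + y') - \<psi> b a) / y'"
  define K where "K = (\<psi> (b - x) b - \<psi> (b - x) a) / (b - a)"
  have key: "\<psi> b a - \<psi> (b - x) a \<le> x * R + y * (K - R)" if y: "0 < y" "y \<le> min x y'" for y
  proof -
    have yh: "y \<le> b - a" using y x by simp
    define t where "t = y / x"
    have t: "0 \<le> t" "t \<le> 1" "x * t = y" using x y by (simp_all add: t_def)
    have "\<psi> b a \<le> \<psi> (b - y) (a + y)" using transfer y yh by simp
    also have "\<dots> \<le> (1 - t) * \<psi> b (a + y) + t * \<psi> (b - x) (a + y)"
      using convex_on_chord_le[OF cp, of "a + y" b "b - x" t] x y yh t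
      by (simp add: algebra_simps flip: t(3))
    also have "\<dots> \<le> (1 - t) * (\<psi> b a + y * R) + t * (\<psi> (b - x) a + y * K)"
    proof (intro add_mono mult_left_mono)
      show "\<psi> b (a + y) \<le> \<psi> b a + y * R"
        using convex_on_chord_le[OF cq, of b a "a + y'" "y / y'"] x y y' by (simp add: R_def)
      show "\<psi> (b - x) (a + y) \<le> \<psi> (b - x) a + y * K"
        using convex_on_chord_le[OF cq, of "b - x" a b "y / (b - a)"] x y yh by (simp add: K_def)
    qed (use t in auto)
    finally have "x * \<psi> b a \<le> x * ((1 - t) * (\<psi> b a + y * R) + t * (\<psi> (b - x) a + y * K))"
      using x by simp
    then have "y * (\<psi> b a - \<psi> (b - x) a) \<le> y * ((x - y) * R + y * K)"
      by (simp add: algebra_simps flip: t(3))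
    then have "\<psi> b a - \<psi> (b - x) a \<le> (x - y) * R + y * K" using y by simp
    then show ?thesis by (simp add: algebra_simps)
  qed
  have "\<psi> b a - \<psi> (b - x) a \<le> x * R"
    by (rule le_of_le_add_vanishing[of "min x y'"]) (use key x y' in auto)
  then show ?thesis using x by (simp add: R_def pos_divide_le_eq mult.commute)
qed

lemma chord_slope_between:
  fixes f :: "real \<Rightarrow> real"
  assumes M: "x < M" "M < y" and le: "(f M - f x) / (M - x) \<le> (f y - f M) / (y - M)"
  shows "(f M - f x) / (M - x) \<le> (f y - f x) / (y - x)"
    and "(f y - f x) / (y - x) \<le> (f y - f M) / (y - M)"
proof -
  define s1 where "s1 = (f M - f x) / (M - x)"
  define s2 where "s2 = (f y - f M) / (y - M)"
  have s12: "s1 \<le> s2" using le by (simp add: s1_def s2_def)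
  have eq: "f y - f x = s1 * (M - x) + s2 * (y - M)" using M by (simp add: s1_def s2_def)
  have "s1 * (y - x) \<le> f y - f x"
    using eq mult_right_mono[OF s12, of "y - M"] M by (simp add: algebra_simps)
  moreover have "f y - f x \<le> s2 * (y - x)"
    using eq mult_right_mono[OF s12, of "M - x"] M by (simp add: algebra_simps)
  ultimately show "s1 \<le> (f y - f x) / (y - x)" "(f y - f x) / (y - x) \<le> s2"
    using M by (simp_all add: pos_le_divide_eq pos_divide_le_eq)
qed

lemma convex_on_Icc_glue:
  fixes f :: "real \<Rightarrow> real"
  assumes left: "convex_on {A..M} f" and right: "convex_on {M..B} f"
    and slope: "\<And>x z. A \<le> x \<Longrightarrow> x < M \<Longrightarrow> M < z \<Longrightarrow> z \<le> B \<Longrightarrow>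
                  (f M - f x) / (M - x) \<le> (f z - f M) / (z - M)"
  shows "convex_on {A..B} f"
proof (rule convex_on_linorderI)
  fix t x y :: real
  assume t: "0 < t" "t < 1" and xy: "x \<in> {A..B}" "y \<in> {A..B}" "x < y"
  define w where "w = (1 - t) *\<^sub>R x + t *\<^sub>R y"
  define s where "s = (f y - f x) / (y - x)"
  have "w = x + t * (y - x)" by (simp add: w_def algebra_simps)
  moreover have "0 \<le> t * (y - x)" "t * (y - x) \<le> y - x"
    using t xy by (auto intro: mult_left_le_one_le)
  ultimately have w: "x \<le> w" "w \<le> y" by linarith+
  have chord: "(1 - t) * f x + t * f y = f x + s * (w - x)" "f x + s * (w - x) = f y - s * (y - w)"
    using xy by (simp_all add: s_def w_def field_simps)
  show "f w \<le> (1 - t) * f x + t * f y"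
  proof (cases "y \<le> M \<or> M \<le> x")
    case True
    then show ?thesis
    proof
      assume "y \<le> M"
      then show ?thesis unfolding w_def using t xy by (intro convex_onD[OF left]) auto
    next
      assume "M \<le> x"
      then show ?thesis unfolding w_def using t xy by (intro convex_onD[OF right]) auto
    qed
  next
    case False
    then have M: "x < M" "M < y" by auto
    define s1 where "s1 = (f M - f x) / (M - x)"
    define s2 where "s2 = (f y - f M) / (y - M)"
    have "(f M - f x) / (M - x) \<le> (f y - f M) / (y - M)" using slope xy M by simp
    then have s: "s1 \<le> s" "s \<le> s2"
      using chord_slope_between[OF M] by (simp_all add: s_def s1_def s2_def)
    show ?thesis
    proof (cases "w \<le> M")
      case True
      have "convex_on {x..M} f" using xy by (intro convex_on_subset[OF left]) auto
      then have "f w \<le> s1 * (w - x) + f x"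
        using convex_onD_Icc'[of x M f w] True w by (simp add: s1_def)
      also have "\<dots> \<le> s * (w - x) + f x" using s w by (simp add: mult_right_mono)
      finally show ?thesis using chord by simp
    next
      case False
      have "convex_on {M..y} f" using xy by (intro convex_on_subset[OF right]) auto
      then have "f w \<le> f y - s2 * (y - w)"
        using convex_onD_Icc''[of M y f w] False w by (simp add: s2_def field_simps)
      also have "\<dots> \<le> f y - s * (y - w)" using s w by (simp add: mult_right_mono)
      finally show ?thesis using chord by simp
    qed
  qed
qed simp

section \<open>Convexity of the staircase region\<close>

lemma convex_on_u_vec_piece:
  fixes \<phi> :: "real^'n::{finite,linorder} \<Rightarrow> real"
  assumes ab: "a < b" and cc: "compwise_convex_on a b \<phi>" and k: "k < CARD('n)"
  shows "convex_on {real k * (b - a)..(real k + 1) * (b - a)} (\<lambda>s. \<phi> (u_vec a b s))"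
proof (rule convex_onI)
  let ?I = "{real k * (b - a)..(real k + 1) * (b - a)}"
  obtain i :: 'n where i: "rank_idx i = k" using ex_rank_idx_eq[OF k] by blast
  have "(staircase a b k a a :: real^'n::{finite,linorder}) \<in> box_n a b"
    using ab by (intro staircase_in_box) auto
  then have "convex_on {a..b} (\<lambda>t. \<phi> (\<chi> j. if j = i then t else staircase a b k a a $ j))"
    using cc unfolding compwise_convex_on_def by blast
  then have g: "convex_on {a..b} (\<lambda>t. \<phi> (staircase a b k t a))"
    by (simp only: staircase_update_fst[OF i])
  define c where "c s = a + s - real k * (b - a)" for s
  have c: "c s \<in> {a..b}" "(u_vec a b s :: real^'n::{finite,linorder}) = staircase a b k (c s) a"
    if "s \<in> ?I" for s
    using that u_vec_eq_staircase[OF ab k, of s] by (auto simp: c_def algebra_simps)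
  fix \<tau> s1 s2 :: real assume \<tau>: "0 < \<tau>" "\<tau> < 1" and s: "s1 \<in> ?I" "s2 \<in> ?I"
  have "(1 - \<tau>) *\<^sub>R s1 + \<tau> *\<^sub>R s2 \<in> ?I"
    using \<tau> s by (intro convexD_alt[OF convex_real_interval(5)]) auto
  moreover have "c ((1 - \<tau>) *\<^sub>R s1 + \<tau> *\<^sub>R s2) = (1 - \<tau>) *\<^sub>R c s1 + \<tau> *\<^sub>R c s2"
    by (simp add: c_def algebra_simps)
  ultimately show "\<phi> (u_vec a b ((1 - \<tau>) *\<^sub>R s1 + \<tau> *\<^sub>R s2))
      \<le> (1 - \<tau>) * \<phi> (u_vec a b s1) + \<tau> * \<phi> (u_vec a b s2)"
    using convex_onD[OF g, of \<tau> "c s1" "c s2"] \<tau> c s by simp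
qed simp

lemma u_vec_kink_slope_le:
  fixes \<phi> :: "real^'n::{finite,linorder} \<Rightarrow> real"
  assumes ab: "a < b" and sc: "schur_concave_on (box_n a b) \<phi>" and cc: "compwise_convex_on a b \<phi>"
    and k: "Suc k < CARD('n)" and x: "0 < x" "x \<le> b - a" and y: "0 < y" "y \<le> b - a"
  defines "M \<equiv> real (Suc k) * (b - a)"
  shows "(\<phi> (u_vec a b M) - \<phi> (u_vec a b (M - x))) / x
           \<le> (\<phi> (u_vec a b (M + y)) - \<phi> (u_vec a b M)) / y"
proof -
  define \<psi> where "\<psi> p q = \<phi> (staircase a b k p q :: real^'n::{finite,linorder})" for p q
  have k': "k < CARD('n)" using k by simp
  have left: "\<phi> (u_vec a b (M - x)) = \<psi> (b - x) a"
    using u_vec_eq_staircase[OF ab k', of "M - x"] x by (simp add: \<psi>_def M_def algebra_simps)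
  have right: "\<phi> (u_vec a b (M + y)) = \<psi> b (a + y)"
    using u_vec_eq_staircase[OF ab k, of "M + y"] y by (simp add: \<psi>_def M_def algebra_simps staircase_Suc)
  have kink: "\<phi> (u_vec a b M) = \<psi> b a"
    using u_vec_eq_staircase[OF ab k, of M] ab by (simp add: \<psi>_def M_def algebra_simps staircase_Suc)
  obtain i1 :: 'n where i1: "rank_idx i1 = k" using ex_rank_idx_eq[OF k'] by blast
  obtain i2 :: 'n where i2: "rank_idx i2 = Suc k" using ex_rank_idx_eq[OF k] by blast
  have "convex_on {a..b} (\<lambda>p. \<psi> p q)" if "q \<in> {a..b}" for q
  proof -
    have "(staircase a b k b q :: real^'n::{finite,linorder}) \<in> box_n a b"
      using ab that by (intro staircase_in_box) auto
    then have "convex_on {a..b} (\<lambda>t. \<phi> (\<chi> j. if j = i1 then t else staircase a b k b q $ j))"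
      using cc unfolding compwise_convex_on_def by blast
    then show ?thesis by (simp only: staircase_update_fst[OF i1] \<psi>_def)
  qed
  moreover have "convex_on {a..b} (\<lambda>q. \<psi> p q)" if "p \<in> {a..b}" for p
  proof -
    have "(staircase a b k p a :: real^'n::{finite,linorder}) \<in> box_n a b"
      using ab that by (intro staircase_in_box) auto
    then have "convex_on {a..b} (\<lambda>t. \<phi> (\<chi> j. if j = i2 then t else staircase a b k p a $ j))"
      using cc unfolding compwise_convex_on_def by blast
    then show ?thesis by (simp only: staircase_update_snd[OF i2] \<psi>_def)
  qed
  moreover have "\<psi> b a \<le> \<psi> (b - t) (a + t)" if t: "0 \<le> t" "t \<le> b - a" for t
  proof -
    let ?u = "staircase a b k b a :: real^'n::{finite,linorder}"
    let ?z = "staircase a b k (b - t) (a + t) :: real^'n::{finite,linorder}"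
    have "?u \<in> box_n a b" "?z \<in> box_n a b" using ab t by (auto intro!: staircase_in_box)
    moreover have "S_sum a ?u = S_sum a ?z" using k by (simp add: S_sum_staircase)
    moreover have "card (interior_coords a b ?u) \<le> 1" by (rule card_interior_coords_staircase)
    ultimately have "majorizes ?u ?z" by (intro majorizes_of_extremal)
    then show ?thesis using sc \<open>?u \<in> box_n a b\<close> \<open>?z \<in> box_n a b\<close>
      by (simp add: schur_concave_on_def \<psi>_def)
  qed
  ultimately have "(\<psi> b a - \<psi> (b - x) a) / x \<le> (\<psi> b (a + y) - \<psi> b a) / y"
    using x y by (intro separately_convex_corner_slope_le)
  then show ?thesis using left right kink by simp
qed

lemma convex_on_u_vec:
  fixes \<phi> :: "real^'n::{finite,linorder} \<Rightarrow> real"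
  assumes ab: "a < b" and sc: "schur_concave_on (box_n a b) \<phi>" and cc: "compwise_convex_on a b \<phi>"
  shows "convex_on {0..real CARD('n) * (b - a)} (\<lambda>s. \<phi> (u_vec a b s))"
proof -
  define G where "G = (\<lambda>s. \<phi> (u_vec a b s :: real^'n::{finite,linorder}))"
  define h where "h = b - a"
  have h: "0 < h" using ab by (simp add: h_def)
  have "convex_on {0..real (Suc m) * h} G" if "Suc m \<le> CARD('n)" for m
    using that
  proof (induction m)
    case 0
    then show ?case using convex_on_u_vec_piece[OF ab cc, of 0] by (simp add: G_def h_def)
  next
    case (Suc m)
    define M where "M = real (Suc m) * h"
    have IH: "convex_on {0..M} G" using Suc by (simp add: M_def)
    have piece: "convex_on {M..M + h} G"
      using convex_on_u_vec_piece[OF ab cc, of "Suc m"] Suc.prems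
      by (simp add: G_def M_def h_def algebra_simps)
    have "convex_on {0..M + h} G"
    proof (rule convex_on_Icc_glue[OF IH piece])
      fix x z assume x: "0 \<le> x" "x < M" and z: "M < z" "z \<le> M + h"
      define x' where "x' = max x (M - h)"
      have x': "0 \<le> x'" "x \<le> x'" "x' < M" "M - x' \<le> h" using x h by (auto simp: x'_def)
      have "(G M - G x) / (M - x) \<le> (G M - G x') / (M - x')"
      proof (cases "x = x'")
        case False
        then have "(G x - G M) / (x - M) \<le> (G x' - G M) / (x' - M)"
          using x x' by (intro convex_on_slope_le(2)[OF IH]) auto
        then show ?thesis by (metis minus_diff_eq minus_divide_divide)
      qed simp
      also have "\<dots> \<le> (G z - G M) / (z - M)"
        using u_vec_kink_slope_le[OF ab sc cc, of m "M - x'" "z - M"] Suc.prems x' z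
        by (simp add: G_def M_def h_def)
      finally show "(G M - G x) / (M - x) \<le> (G z - G M) / (z - M)" .
    qed
    then show ?case by (simp add: M_def algebra_simps)
  qed
  from this[of "CARD('n) - 1"] show ?thesis by (simp add: G_def h_def)
qed

lemma S_sum_convex_combination:
  "S_sum a ((1 - t) *\<^sub>R x + t *\<^sub>R y) = (1 - t) * S_sum a x + t * S_sum a y"
  by (simp add: S_sum_def algebra_simps sum.distrib sum_subtractf sum_distrib_left)

lemma convex_box_n: "convex (box_n a b :: (real^'n::{finite,linorder}) set)"
proof -
  have "box_n a b = cbox (vec a) (vec b :: real^'n::{finite,linorder})" by (auto simp: box_n_def mem_box_cart)
  then show ?thesis by simp
qed

lemma convex_Theta_alpha:
  fixes \<phi> :: "real^'n::{finite,linorder} \<Rightarrow> real"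
  assumes ab: "a < b" and sc: "schur_concave_on (box_n a b) \<phi>" and cc: "compwise_convex_on a b \<phi>"
  shows "convex (Theta_alpha \<phi> a b \<alpha>)"
proof -
  have G: "convex_on {0..real CARD('n) * (b - a)} (\<lambda>s. \<phi> (u_vec a b s))"
    by (rule convex_on_u_vec[OF ab sc cc])
  define F where "F = (\<lambda>x::real^'n::{finite,linorder}. \<phi> (u_vec a b (S_sum a x)))"
  have "convex_on (box_n a b) F"
  proof (rule convex_onI)
    fix t :: real and x y :: "real^'n::{finite,linorder}"
    assume "0 < t" "t < 1" "x \<in> box_n a b" "y \<in> box_n a b"
    then show "F ((1 - t) *\<^sub>R x + t *\<^sub>R y) \<le> (1 - t) * F x + t * F y"
      using convex_onD[OF G, of t "S_sum a x" "S_sum a y"] S_sum_range[of x a b] S_sum_range[of y a b]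
      by (simp add: F_def S_sum_convex_combination)
  qed (rule convex_box_n)
  then have "convex (epigraph (box_n a b) F \<inter> UNIV \<times> {..\<alpha>})"
    by (intro convex_Int convex_Times) (simp_all add: convex_epigraph)
  moreover have "epigraph (box_n a b) F \<inter> UNIV \<times> {..\<alpha>} = Theta_alpha \<phi> a b \<alpha>"
    by (auto simp: epigraph_def Theta_alpha_def F_def)
  ultimately show ?thesis by simp
qed

theorem mainTheorem14:
  fixes \<phi> :: "real^'n::{finite,linorder} \<Rightarrow> real" and a b \<alpha> :: real
  assumes "a < b"
    and "schur_concave_on (box_n a b) \<phi>"
  shows "convex hull (S_alpha \<phi> a b \<alpha>) = convex hull (Theta_alpha \<phi> a b \<alpha>) \<and>
         (compwise_convex_on a b \<phi> \<longrightarrow> convex (Theta_alpha \<phi> a b \<alpha>))"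
  using convex_hull_S_alpha_eq_Theta_alpha[OF assms] convex_Theta_alpha[OF assms] by blast

end
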